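(* Let $K\ge 1$ be an integer, let $\lambda_1,\dots,\lambda_K>0$, $\Psi>0$ and $r_{min}\ge 0$ be real numbers. For $\rho=(\rho_1,\dots,\rho_K)\in[0,\infty)^K$ and $i\in\{1,\dots,K\}$ define the (relaxed) unicast rate $$r_i^U(\rho)=\log_2\!\left(1+\frac{\rho_i\lambda_i}{\sum_{j=1}^{i-1}\rho_j\lambda_i+\Psi}\right).$$ Define $\rho_{1,min},\dots,\rho_{K,min}$ recursively as the numbers for which user $i$ achieves exactly rate $r_{min}$ when user $j$ is allocated $\rho_{j,min}$ for all $j$, i.e. $$r_{min}=\log_2\!\left(1+\frac{\rho_{i,min}\lambda_i}{\sum_{j=1}^{i-1}\rho_{j,min}\lambda_i+\Psi}\right),\quad\text{equivalently}\quad \rho_{i,min}=(2^{r_{min}}-1)\Big(\sum_{j=1}^{i-1}\rho_{j,min}+\Psi/\lambda_i\Big),$$ and let $\rho_{sum}^{min}=\sum_{i=1}^K\rho_{i,min}$. Then $$\rho_{sum}^{min}=(2^{r_{min}}-1)\,\Psi\sum_{i=0}^{K-1}\frac{2^{i r_{min}}}{\lambda_{K-i}}.$$ Moreover, let $\triangle\rho_1,\dots,\triangle\rho_K\ge 0$, set $\rho_i=\rho_{i,min}+\triangle\rho_i$ for each $i$, and let $\triangle r_i^U=r_i^U(\rho)-r_{min}$. Define $$\rho_i^e=\Big(\triangle\rho_i-(2^{r_{min}}-1)\sum_{j=1}^{i-1}\triangle\rho_j\Big)2^{(K-i)r_{min}},\qquad n_i^e=\Big(\Psi/\lambda_i+\sum_{j=1}^{i}\rho_{j,min}\Big)2^{(K-i)r_{min}}.$$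 Then $\sum_{i=1}^K r_i^U(\rho)=Kr_{min}+\sum_{i=1}^K\triangle r_i^U$ and, for every $i\in\{1,\dots,K\}$, $$\triangle r_i^U=\log_2\!\left(1+\frac{\rho_i^e}{n_i^e+\sum_{j=1}^{i-1}\rho_j^e}\right).$$
   Context: This arises in a NOMA downlink with $K$ users decoded by successive interference cancellation: $\rho_i$ is the transmit SNR allocated to user $i$'s unicast signal, $\lambda_i$ is user $i$'s estimated channel gain, and $\Psi>0$ is a constant effective noise term (in the paper $\Psi=\rho b+a$ with $a=1/(1-\phi^2)$, $b=\phi^2\Omega_\epsilon/(1-\phi^2)$). $\rho_{i,min}$ is the minimum SNR giving user $i$ rate $r_{min}$ and $\triangle\rho_i$ is the excess SNR allocated to user $i$. Empty sums are zero. *)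

theory Defs
  imports Complex_Main
begin

text \<open>Relaxed unicast rate of user i (users indexed 1..K).\<close>
definition rU :: "(nat \<Rightarrow> real) \<Rightarrow> real \<Rightarrow> (nat \<Rightarrow> real) \<Rightarrow> nat \<Rightarrow> real" where
  "rU lam Psi rho i =
     log 2 (1 + rho i * lam i / ((\<Sum>j\<in>{1..<i}. rho j * lam i) + Psi))"

end

theory Submission
  imports Defs
begin

(* Write q = 2 powr rmin, S_i and D_i for the sums of the rhomin j and drho j over j < i, and
   P_i = Psi / lam i.  The minimal powers obey rhomin i = (q - 1) (S_i + P_i), so the partial sums
   satisfy S_(i+1) = q S_i + (q - 1) P_i and unroll to the geometric closed form.
   Subtracting rmin = log 2 q from the rate of user i divides its SINR term
   1 + rho i / (S_i + D_i + P_i) by q; because rhomin i + S_i + P_i = q (S_i + P_i), the quotient is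
   1 + (drho i - (q - 1) D_i) / (q (S_i + D_i + P_i)).  Scaling by q^(K-i) yields the effective
   form, since the effective powers telescope: their sum over j < i is q^(K-i+1) D_i. *)

lemma powr_real_mult: "0 < x \<Longrightarrow> x powr (real n * r) = (x powr r) ^ n"
  by (simp add: powr_realpow[symmetric] powr_powr mult.commute)

lemma sum_recurrence_closed_form:
  fixes x c :: "nat \<Rightarrow> 'a::comm_ring_1"
  assumes "\<forall>i\<in>{1..n}. x i = (q - 1) * ((\<Sum>j\<in>{1..<i}. x j) + c i)"
  shows "(\<Sum>i\<in>{1..n}. x i) = (q - 1) * (\<Sum>i\<in>{1..n}. q ^ (n - i) * c i)"
  using assms
proof (induction n)
  case 0
  then show ?case by simp
next
  case (Suc n)
  let ?C = "\<Sum>i\<in>{1..n}. q ^ (n - i) * c i"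
  have IH: "(\<Sum>i\<in>{1..n}. x i) = (q - 1) * ?C"
    using Suc.IH Suc.prems by simp
  have "x (Suc n) = (q - 1) * ((\<Sum>i\<in>{1..n}. x i) + c (Suc n))"
    using Suc.prems by (simp add: atLeastLessThanSuc_atLeastAtMost)
  then have "(\<Sum>i\<in>{1..Suc n}. x i) = q * (\<Sum>i\<in>{1..n}. x i) + (q - 1) * c (Suc n)"
    by (simp add: algebra_simps)
  also have "\<dots> = (q - 1) * (q * ?C + c (Suc n))"
    unfolding IH by (simp add: algebra_simps)
  also have "q * ?C = (\<Sum>i\<in>{1..n}. q ^ (Suc n - i) * c i)"
    by (simp add: sum_distrib_left Suc_diff_le mult.assoc)
  finally show ?case by simp
qed

lemma recurrence_nonneg:
  fixes x c :: "nat \<Rightarrow> 'a::linordered_idom"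
  assumes "q \<ge> 1" and "\<forall>i\<in>{1..n}. c i \<ge> 0"
    and "\<forall>i\<in>{1..n}. x i = (q - 1) * ((\<Sum>j\<in>{1..<i}. x j) + c i)"
  shows "i \<in> {1..n} \<Longrightarrow> x i \<ge> 0"
proof (induction i rule: less_induct)
  case (less i)
  have "(\<Sum>j\<in>{1..<i}. x j) \<ge> 0"
    using less by (intro sum_nonneg) auto
  then show ?case
    using assms less.prems by simp
qed

lemma sum_effective_power_eq:
  fixes d :: "nat \<Rightarrow> 'a::comm_ring_1"
  assumes "i \<le> K"
  shows "(\<Sum>j\<in>{1..<i}. (d j - (q - 1) * (\<Sum>k\<in>{1..<j}. d k)) * q ^ (K - j))
       = q ^ Suc (K - i) * (\<Sum>j\<in>{1..<i}. d j)"
  using assms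
proof (induction i)
  case 0
  then show ?case by simp
next
  case (Suc i)
  show ?case
  proof (cases "i = 0")
    case True
    then show ?thesis by simp
  next
    case False
    let ?D = "\<Sum>j\<in>{1..<i}. d j"
    have "(\<Sum>j\<in>{1..<Suc i}. (d j - (q - 1) * (\<Sum>k\<in>{1..<j}. d k)) * q ^ (K - j))
        = q ^ Suc (K - i) * ?D + (d i - (q - 1) * ?D) * q ^ (K - i)"
      using False Suc by simp
    also have "\<dots> = q ^ (K - i) * (?D + d i)"
      by (simp add: algebra_simps)
    also have "\<dots> = q ^ Suc (K - Suc i) * (\<Sum>j\<in>{1..<Suc i}. d j)"
      using False Suc.prems by (simp add: Suc_diff_Suc)
    finally show ?thesis .
  qed
qed

lemma rU_eq:
  assumes "lam i > 0"
  shows "rU lam Psi rho i = log 2 (1 + rho i / ((\<Sum>j\<in>{1..<i}. rho j) + Psi / lam i))"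
proof -
  have "rho i * lam i / ((\<Sum>j\<in>{1..<i}. rho j * lam i) + Psi)
      = rho i * lam i / (((\<Sum>j\<in>{1..<i}. rho j) + Psi / lam i) * lam i)"
    using assms by (simp add: sum_distrib_right distrib_right)
  also have "\<dots> = rho i / ((\<Sum>j\<in>{1..<i}. rho j) + Psi / lam i)"
    using assms by simp
  finally show ?thesis
    by (simp only: rU_def)
qed

lemma log_rate_shift:
  fixes q S D P d :: real
  assumes "q \<ge> 1" "S \<ge> 0" "D \<ge> 0" "P > 0" "d \<ge> 0"
  shows "log 2 (1 + ((q - 1) * (S + P) + d) / (S + D + P)) - log 2 q
       = log 2 (1 + (d - (q - 1) * D) / (q * (S + D + P)))"
proof -
  have E: "S + D + P > 0" and "(q - 1) * (S + P) + d \<ge> 0"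
    using assms by simp_all
  then have "1 + ((q - 1) * (S + P) + d) / (S + D + P) > 0"
    by (simp add: add_pos_nonneg)
  then have "log 2 (1 + ((q - 1) * (S + P) + d) / (S + D + P)) - log 2 q
      = log 2 ((1 + ((q - 1) * (S + P) + d) / (S + D + P)) / q)"
    using assms by (simp add: log_divide_pos)
  also have "(1 + ((q - 1) * (S + P) + d) / (S + D + P)) / q
      = (S + D + P + ((q - 1) * (S + P) + d)) / (q * (S + D + P))"
    using E by (simp add: add_divide_eq_iff divide_divide_eq_left mult.commute)
  also have "\<dots> = (q * (S + D + P) + (d - (q - 1) * D)) / (q * (S + D + P))"
    by (simp add: algebra_simps)
  also have "\<dots> = 1 + (d - (q - 1) * D) / (q * (S + D + P))"
    using E assms(1) by (simp add: add_divide_eq_iff)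
  finally show ?thesis .
qed

lemma effective_snr_eq:
  fixes q c :: real and x d :: "nat \<Rightarrow> real"
  assumes "q > 0" "1 \<le> i" "i \<le> K" and "x i = (q - 1) * ((\<Sum>j\<in>{1..<i}. x j) + c)"
  shows "(d i - (q - 1) * (\<Sum>j\<in>{1..<i}. d j)) * q ^ (K - i)
           / ((c + (\<Sum>j\<in>{1..i}. x j)) * q ^ (K - i)
              + (\<Sum>j\<in>{1..<i}. (d j - (q - 1) * (\<Sum>k\<in>{1..<j}. d k)) * q ^ (K - j)))
       = (d i - (q - 1) * (\<Sum>j\<in>{1..<i}. d j))
           / (q * ((\<Sum>j\<in>{1..<i}. x j) + (\<Sum>j\<in>{1..<i}. d j) + c))"
proof -
  let ?S = "\<Sum>j\<in>{1..<i}. x j" and ?D = "\<Sum>j\<in>{1..<i}. d j"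
  have "(\<Sum>j\<in>{1..i}. x j) = ?S + x i"
    using assms(2) by (simp add: atLeastLessThanSuc_atLeastAtMost[symmetric])
  then have "(c + (\<Sum>j\<in>{1..i}. x j)) * q ^ (K - i)
      + (\<Sum>j\<in>{1..<i}. (d j - (q - 1) * (\<Sum>k\<in>{1..<j}. d k)) * q ^ (K - j))
      = (q * (?S + ?D + c)) * q ^ (K - i)"
    using assms sum_effective_power_eq[OF assms(3), of d q] by (simp add: algebra_simps)
  then show ?thesis
    using assms(1) by simp
qed

lemma excess_rate_eq:
  fixes q Psi :: real and lam rhomin drho :: "nat \<Rightarrow> real"
  assumes q: "q \<ge> 1" and i: "i \<in> {1..K}"
    and lam_pos: "\<forall>j\<in>{1..K}. lam j > 0" and Psi_pos: "Psi > 0"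
    and drho_nn: "\<forall>j\<in>{1..K}. drho j \<ge> 0"
    and rec: "\<forall>j\<in>{1..K}. rhomin j = (q - 1) * ((\<Sum>k\<in>{1..<j}. rhomin k) + Psi / lam j)"
  shows "rU lam Psi (\<lambda>j. rhomin j + drho j) i - log 2 q
       = log 2 (1 + (drho i - (q - 1) * (\<Sum>j\<in>{1..<i}. drho j)) * q ^ (K - i)
           / ((Psi / lam i + (\<Sum>j\<in>{1..i}. rhomin j)) * q ^ (K - i)
              + (\<Sum>j\<in>{1..<i}. (drho j - (q - 1) * (\<Sum>k\<in>{1..<j}. drho k)) * q ^ (K - j))))"
proof -
  let ?S = "\<Sum>j\<in>{1..<i}. rhomin j" and ?D = "\<Sum>j\<in>{1..<i}. drho j" and ?P = "Psi / lam i"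
  have lam_i: "lam i > 0"
    using i lam_pos by simp
  have rec_i: "rhomin i = (q - 1) * (?S + ?P)"
    using i rec by simp
  have "\<forall>j\<in>{1..K}. Psi / lam j \<ge> 0"
    using lam_pos Psi_pos by (simp add: less_imp_le)
  then have "?S \<ge> 0"
    using i recurrence_nonneg[OF q _ rec] by (intro sum_nonneg) auto
  moreover have "?D \<ge> 0"
    using i drho_nn by (intro sum_nonneg) auto
  moreover have "rU lam Psi (\<lambda>j. rhomin j + drho j) i
      = log 2 (1 + ((q - 1) * (?S + ?P) + drho i) / (?S + ?D + ?P))"
    using rec_i by (simp add: rU_eq[where lam = lam and i = i, OF lam_i] sum.distrib add.assoc)
  ultimately have "rU lam Psi (\<lambda>j. rhomin j + drho j) i - log 2 q
      = log 2 (1 + (drho i - (q - 1) * ?D) / (q * (?S + ?D + ?P)))"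
    using q lam_i Psi_pos drho_nn i by (simp add: log_rate_shift)
  also have "\<dots> = log 2 (1 + (drho i - (q - 1) * ?D) * q ^ (K - i)
           / ((?P + (\<Sum>j\<in>{1..i}. rhomin j)) * q ^ (K - i)
              + (\<Sum>j\<in>{1..<i}. (drho j - (q - 1) * (\<Sum>k\<in>{1..<j}. drho k)) * q ^ (K - j))))"
    using q i by (subst effective_snr_eq[OF _ _ _ rec_i]) auto
  finally show ?thesis .
qed

theorem proposition1:
  fixes K :: nat and lam :: "nat \<Rightarrow> real" and Psi rmin :: real
    and rhomin drho :: "nat \<Rightarrow> real"
  assumes K: "K \<ge> 1"
    and lam_pos: "\<forall>i\<in>{1..K}. lam i > 0"
    and Psi_pos: "Psi > 0"
    and rmin_nn: "rmin \<ge> 0"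
    and rhomin_def: "\<forall>i\<in>{1..K}. rhomin i =
        (2 powr rmin - 1) * ((\<Sum>j\<in>{1..<i}. rhomin j) + Psi / lam i)"
    and drho_nn: "\<forall>i\<in>{1..K}. drho i \<ge> 0"
  shows "(\<Sum>i\<in>{1..K}. rhomin i) =
           (2 powr rmin - 1) * Psi * (\<Sum>i\<in>{0..<K}. 2 powr (real i * rmin) / lam (K - i))
       \<and> (let rho = (\<lambda>i. rhomin i + drho i);
             dr = (\<lambda>i. rU lam Psi rho i - rmin);
             rhoe = (\<lambda>i. (drho i - (2 powr rmin - 1) * (\<Sum>j\<in>{1..<i}. drho j))
                          * 2 powr (real (K - i) * rmin));
             ne = (\<lambda>i. (Psi / lam i + (\<Sum>j\<in>{1..i}. rhomin j)) * 2 powr (real (K - i) * rmin))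
         in (\<Sum>i\<in>{1..K}. rU lam Psi rho i) = real K * rmin + (\<Sum>i\<in>{1..K}. dr i)
            \<and> (\<forall>i\<in>{1..K}. dr i = log 2 (1 + rhoe i / (ne i + (\<Sum>j\<in>{1..<i}. rhoe j)))))"
proof -
  define q where "q = (2::real) powr rmin"
  have q: "q \<ge> 1"
    using rmin_nn by (simp add: q_def ge_one_powr_ge_zero)
  have rmin: "rmin = log 2 q"
    by (simp add: q_def)
  have powr_q: "2 powr (real n * rmin) = q ^ n" for n
    by (simp add: q_def powr_real_mult)
  have rec: "\<forall>i\<in>{1..K}. rhomin i = (q - 1) * ((\<Sum>j\<in>{1..<i}. rhomin j) + Psi / lam i)"
    using rhomin_def by (simp add: q_def)
  have "(\<Sum>i\<in>{0..<K}. q ^ i / lam (K - i)) = (\<Sum>i\<in>{1..K}. q ^ (K - i) / lam i)"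
    by (subst sum.atLeastLessThan_rev_at_least_Suc_atMost) (auto intro!: sum.cong)
  then have "(\<Sum>i\<in>{1..K}. rhomin i) = (q - 1) * Psi * (\<Sum>i\<in>{0..<K}. q ^ i / lam (K - i))"
    using sum_recurrence_closed_form[OF rec] by (simp add: sum_distrib_left mult_ac)
  moreover have "(\<Sum>i\<in>{1..K}. rU lam Psi (\<lambda>j. rhomin j + drho j) i)
      = real K * log 2 q + (\<Sum>i\<in>{1..K}. rU lam Psi (\<lambda>j. rhomin j + drho j) i - log 2 q)"
    by (simp add: sum_subtractf)
  ultimately show ?thesis
    unfolding Let_def powr_q q_def[symmetric] unfolding rmin
    using excess_rate_eq[OF q _ lam_pos Psi_pos drho_nn rec] by simp
qed

end
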